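(* Under the setting and assumptions in the context, if $\Pr(Y(0)=0,Y(1)=1)>0$, then $$APCE_H=\frac{E[Y\mid Z=1]-E[Y\mid Z=0]}{\Pr(Y(1)=1)-\Pr(Y(0)=1)}.$$
   Context: Units are drawn from a population (a probability space). Each unit has a binary assignment $Z\in\{0,1\}$ with $0<\Pr(Z=1)<1$, binary potential recommendations $R(0),R(1)\in\{0,1\}$, and binary potential outcomes $Y(0),Y(1)\in\{0,1\}$ indexed by the recommendation only (exclusion restriction). Observed quantities are $R=R(Z)$ and $Y=Y(R(Z))$. Assumptions: (Randomization) $Z$ is independent of $(R(0),R(1),Y(0),Y(1))$; (Monotonicity) $Y(1)\ge Y(0)$ almost surely. Principal strata: Always Low $AL=\{Y(0)=Y(1)=0\}$, Always High $AH=\{Y(0)=Y(1)=1\}$, Helpable $H=\{Y(0)=0,Y(1)=1\}$. For a stratum $J$ with positive probability, $APCE_J=E[R(1)-R(0)\mid J]$. *)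

theory Defs
  imports "HOL-Probability.Probability"
begin

definition cond_exp_ev :: "'a measure \<Rightarrow> ('a \<Rightarrow> real) \<Rightarrow> 'a set \<Rightarrow> real" where
  "cond_exp_ev M X A = (\<integral>\<omega>. X \<omega> * indicator A \<omega> \<partial>M) / measure M A"

end

(*
  Write Y(r) = Y0 + r (Y1 - Y0) for the outcome under recommendation r. Randomization makes
  the arm Z = z independent of the potential quantities, so E[Y | Z = z] = E[Y(R(z))], and
  the numerator is E[(R(1) - R(0)) (Y1 - Y0)]. Monotonicity makes Y1 - Y0 almost surely the
  indicator of the helpable stratum H, so the numerator is E[(R(1) - R(0)) 1_H] and the
  denominator P(Y1) - P(Y0) is P(H).
*)

theory Submission
  imports Defs
begin

lemma measurable_Pair_count_space:
  fixes X :: "'a \<Rightarrow> 'b::countable" and Y :: "'a \<Rightarrow> 'c::countable"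
  assumes "X \<in> M \<rightarrow>\<^sub>M count_space UNIV" "Y \<in> M \<rightarrow>\<^sub>M count_space UNIV"
  shows "(\<lambda>\<omega>. (X \<omega>, Y \<omega>)) \<in> M \<rightarrow>\<^sub>M count_space UNIV"
  using measurable_Pair[OF assms] by (simp add: pair_measure_countable)

lemma integral_fun_finite_rv_indicator:
  fixes X :: "'a \<Rightarrow> 'b::finite" and g :: "'b \<Rightarrow> real"
  assumes "finite_measure M" and [measurable]: "X \<in> M \<rightarrow>\<^sub>M count_space UNIV" "A \<in> sets M"
  shows "(\<integral>\<omega>. g (X \<omega>) * indicator A \<omega> \<partial>M)
    = (\<Sum>b\<in>UNIV. g b * measure M ({\<omega>\<in>space M. X \<omega> = b} \<inter> A))"
proof -
  interpret finite_measure M by fact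
  have "(\<integral>\<omega>. g (X \<omega>) * indicator A \<omega> \<partial>M)
      = (\<integral>\<omega>. (\<Sum>b\<in>UNIV. g b * indicator ({\<omega>\<in>space M. X \<omega> = b} \<inter> A) \<omega>) \<partial>M)"
    by (rule Bochner_Integration.integral_cong) (auto simp: indicator_def)
  also have "\<dots> = (\<Sum>b\<in>UNIV. g b * measure M ({\<omega>\<in>space M. X \<omega> = b} \<inter> A))"
    by (subst Bochner_Integration.integral_sum)
      (auto intro!: integrable_real_indicator simp: Int_absorb2 less_top[symmetric])
  finally show ?thesis .
qed

lemma integral_fun_finite_rv:
  fixes X :: "'a \<Rightarrow> 'b::finite" and g :: "'b \<Rightarrow> real"
  assumes "finite_measure M" and [measurable]: "X \<in> M \<rightarrow>\<^sub>M count_space UNIV"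
  shows "(\<integral>\<omega>. g (X \<omega>) \<partial>M) = (\<Sum>b\<in>UNIV. g b * measure M {\<omega>\<in>space M. X \<omega> = b})"
proof -
  have "(\<integral>\<omega>. g (X \<omega>) \<partial>M) = (\<integral>\<omega>. g (X \<omega>) * indicator (space M) \<omega> \<partial>M)"
    by (rule Bochner_Integration.integral_cong) auto
  then show ?thesis
    using integral_fun_finite_rv_indicator[OF assms sets.top, of g] by (simp add: Int_absorb2)
qed

lemma cond_exp_ev_cong:
  assumes "\<And>\<omega>. \<omega> \<in> A \<Longrightarrow> f \<omega> = g \<omega>"
  shows "cond_exp_ev M f A = cond_exp_ev M g A"
proof -
  have "f \<omega> * indicator A \<omega> = g \<omega> * indicator A \<omega>" for \<omega>
    using assms by (simp add: indicator_def)
  then show ?thesis by (simp only: cond_exp_ev_def)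
qed

lemma cond_exp_ev_indep:
  fixes X :: "'a \<Rightarrow> 'b::finite" and g :: "'b \<Rightarrow> real"
  assumes "finite_measure M" "X \<in> M \<rightarrow>\<^sub>M count_space UNIV" "A \<in> sets M" "measure M A \<noteq> 0"
    and indep: "\<And>b. measure M ({\<omega>\<in>space M. X \<omega> = b} \<inter> A) = measure M A * measure M {\<omega>\<in>space M. X \<omega> = b}"
  shows "cond_exp_ev M (\<lambda>\<omega>. g (X \<omega>)) A = (\<integral>\<omega>. g (X \<omega>) \<partial>M)"
  unfolding cond_exp_ev_def integral_fun_finite_rv_indicator[OF assms(1-3)]
    integral_fun_finite_rv[OF assms(1,2)] indep
  using assms(4) by (simp add: sum_divide_distrib)

lemma measure_Diff_AE_subset:
  assumes "finite_measure M" "A \<in> sets M" "B \<in> sets M" "AE x in M. x \<in> B \<longrightarrow> x \<in> A"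
  shows "measure M (A - B) = measure M A - measure M B"
proof -
  have "measure M (A \<inter> B) = measure M B"
    by (rule measure_eq_AE) (use assms in auto)
  then show ?thesis
    using finite_measure.finite_measure_Diff'[OF assms(1-3)] by simp
qed

lemma integral_diff_potential_outcomes:
  assumes "finite_measure M"
    and mR0 [measurable]: "R0 \<in> M \<rightarrow>\<^sub>M count_space UNIV"
    and mR1 [measurable]: "R1 \<in> M \<rightarrow>\<^sub>M count_space UNIV"
    and [measurable]: "Y0 \<in> M \<rightarrow>\<^sub>M count_space UNIV" "Y1 \<in> M \<rightarrow>\<^sub>M count_space UNIV"
    and mono: "AE \<omega> in M. Y0 \<omega> \<longrightarrow> Y1 \<omega>"
  shows "(\<integral>\<omega>. of_bool (if R1 \<omega> then Y1 \<omega> else Y0 \<omega>) \<partial>M :: real)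
         - (\<integral>\<omega>. of_bool (if R0 \<omega> then Y1 \<omega> else Y0 \<omega>) \<partial>M)
       = (\<integral>\<omega>. (of_bool (R1 \<omega>) - of_bool (R0 \<omega>)) * indicator {\<omega>\<in>space M. \<not> Y0 \<omega> \<and> Y1 \<omega>} \<omega> \<partial>M)"
proof -
  interpret finite_measure M by fact
  have integrable: "integrable M (\<lambda>\<omega>. of_bool (if R \<omega> then Y1 \<omega> else Y0 \<omega>) :: real)"
    if [measurable]: "R \<in> M \<rightarrow>\<^sub>M count_space UNIV" for R
    by (rule integrable_const_bound[where B = 1]) auto
  have "AE \<omega> in M. (of_bool (if R1 \<omega> then Y1 \<omega> else Y0 \<omega>) :: real) - of_bool (if R0 \<omega> then Y1 \<omega> else Y0 \<omega>)
      = (of_bool (R1 \<omega>) - of_bool (R0 \<omega>)) * indicator {\<omega>\<in>space M. \<not> Y0 \<omega> \<and> Y1 \<omega>} \<omega>"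
    using mono AE_space by eventually_elim (auto simp: indicator_def)
  then have "(\<integral>\<omega>. (of_bool (if R1 \<omega> then Y1 \<omega> else Y0 \<omega>) :: real) - of_bool (if R0 \<omega> then Y1 \<omega> else Y0 \<omega>) \<partial>M)
      = (\<integral>\<omega>. (of_bool (R1 \<omega>) - of_bool (R0 \<omega>)) * indicator {\<omega>\<in>space M. \<not> Y0 \<omega> \<and> Y1 \<omega>} \<omega> \<partial>M)"
    by (rule integral_cong_AE[rotated 2]) measurable
  then show ?thesis
    using integrable[OF mR1] integrable[OF mR0] by simp
qed

lemma cond_exp_ev_randomized_arm:
  fixes Z R0 R1 Y0 Y1 :: "'a \<Rightarrow> bool"
  assumes "finite_measure M"
    and [measurable]: "Z \<in> M \<rightarrow>\<^sub>M count_space UNIV"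
      "R0 \<in> M \<rightarrow>\<^sub>M count_space UNIV" "R1 \<in> M \<rightarrow>\<^sub>M count_space UNIV"
      "Y0 \<in> M \<rightarrow>\<^sub>M count_space UNIV" "Y1 \<in> M \<rightarrow>\<^sub>M count_space UNIV"
    and rand: "\<And>t. measure M {\<omega>\<in>space M. Z \<omega> = z \<and> (R0 \<omega>, R1 \<omega>, Y0 \<omega>, Y1 \<omega>) = t}
      = measure M {\<omega>\<in>space M. Z \<omega> = z} * measure M {\<omega>\<in>space M. (R0 \<omega>, R1 \<omega>, Y0 \<omega>, Y1 \<omega>) = t}"
    and nonnull: "measure M {\<omega>\<in>space M. Z \<omega> = z} \<noteq> 0"
  shows "cond_exp_ev M (\<lambda>\<omega>. of_bool (if (if Z \<omega> then R1 \<omega> else R0 \<omega>) then Y1 \<omega> else Y0 \<omega>))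
      {\<omega>\<in>space M. Z \<omega> = z}
    = (\<integral>\<omega>. of_bool (if (if z then R1 \<omega> else R0 \<omega>) then Y1 \<omega> else Y0 \<omega>) \<partial>M)"
proof -
  define T where "T = (\<lambda>\<omega>. (R0 \<omega>, R1 \<omega>, Y0 \<omega>, Y1 \<omega>))"
  have mT: "T \<in> M \<rightarrow>\<^sub>M count_space UNIV"
    unfolding T_def by (intro measurable_Pair_count_space) measurable
  let ?g = "\<lambda>(r0, r1, y0, y1). of_bool (if (if z then r1 else r0) then y1 else y0) :: real"
  have "cond_exp_ev M (\<lambda>\<omega>. of_bool (if (if Z \<omega> then R1 \<omega> else R0 \<omega>) then Y1 \<omega> else Y0 \<omega>))
      {\<omega>\<in>space M. Z \<omega> = z} = cond_exp_ev M (\<lambda>\<omega>. ?g (T \<omega>)) {\<omega>\<in>space M. Z \<omega> = z}"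
    by (rule cond_exp_ev_cong) (simp add: T_def)
  also have "\<dots> = (\<integral>\<omega>. ?g (T \<omega>) \<partial>M)"
  proof (rule cond_exp_ev_indep[OF assms(1) mT _ nonnull])
    fix t
    have "{\<omega>\<in>space M. T \<omega> = t} \<inter> {\<omega>\<in>space M. Z \<omega> = z} = {\<omega>\<in>space M. Z \<omega> = z \<and> T \<omega> = t}"
      by blast
    then show "measure M ({\<omega>\<in>space M. T \<omega> = t} \<inter> {\<omega>\<in>space M. Z \<omega> = z})
        = measure M {\<omega>\<in>space M. Z \<omega> = z} * measure M {\<omega>\<in>space M. T \<omega> = t}"
      using rand[of t] unfolding T_def by simp
  qed measurable
  finally show ?thesis by (simp add: T_def)
qed

theorem mainTheorem2:
  fixes M :: "'a measure"
    and Z R0 R1 Y0 Y1 :: "'a \<Rightarrow> bool"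
  assumes P: "prob_space M"
    and mZ: "Z \<in> M \<rightarrow>\<^sub>M count_space UNIV"
    and mR0: "R0 \<in> M \<rightarrow>\<^sub>M count_space UNIV"
    and mR1: "R1 \<in> M \<rightarrow>\<^sub>M count_space UNIV"
    and mY0: "Y0 \<in> M \<rightarrow>\<^sub>M count_space UNIV"
    and mY1: "Y1 \<in> M \<rightarrow>\<^sub>M count_space UNIV"
    and Zpos: "0 < measure M {\<omega>\<in>space M. Z \<omega>}"
    and Zlt1: "measure M {\<omega>\<in>space M. Z \<omega>} < 1"
    and rand: "\<And>z t. measure M {\<omega>\<in>space M. Z \<omega> = z \<and> (R0 \<omega>, R1 \<omega>, Y0 \<omega>, Y1 \<omega>) = t}
               = measure M {\<omega>\<in>space M. Z \<omega> = z}
                 * measure M {\<omega>\<in>space M. (R0 \<omega>, R1 \<omega>, Y0 \<omega>, Y1 \<omega>) = t}"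
    and mono: "AE \<omega> in M. of_bool (Y1 \<omega>) \<ge> (of_bool (Y0 \<omega>) :: real)"
    and Hpos: "0 < measure M {\<omega>\<in>space M. \<not> Y0 \<omega> \<and> Y1 \<omega>}"
  shows
    "let R = (\<lambda>\<omega>. if Z \<omega> then R1 \<omega> else R0 \<omega>);
         Y = (\<lambda>\<omega>. if R \<omega> then Y1 \<omega> else Y0 \<omega>);
         H = {\<omega>\<in>space M. \<not> Y0 \<omega> \<and> Y1 \<omega>}
     in cond_exp_ev M (\<lambda>\<omega>. of_bool (R1 \<omega>) - of_bool (R0 \<omega>)) H
        = (cond_exp_ev M (\<lambda>\<omega>. of_bool (Y \<omega>)) {\<omega>\<in>space M. Z \<omega>}
           - cond_exp_ev M (\<lambda>\<omega>. of_bool (Y \<omega>)) {\<omega>\<in>space M. \<not> Z \<omega>})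
          / (measure M {\<omega>\<in>space M. Y1 \<omega>} - measure M {\<omega>\<in>space M. Y0 \<omega>})"
proof -
  interpret prob_space M by (rule P)
  note [measurable] = mZ mR0 mR1 mY0 mY1
  have "measure M {\<omega>\<in>space M. \<not> Z \<omega>} = 1 - measure M {\<omega>\<in>space M. Z \<omega>}"
    by (rule prob_neg) measurable
  then have arm_nonnull: "measure M {\<omega>\<in>space M. Z \<omega> = z} \<noteq> 0" for z
    using Zpos Zlt1 by (cases z) simp_all
  note arm = cond_exp_ev_randomized_arm[OF finite_measure_axioms mZ mR0 mR1 mY0 mY1 rand arm_nonnull]
  have arms: "cond_exp_ev M (\<lambda>\<omega>. of_bool (if (if Z \<omega> then R1 \<omega> else R0 \<omega>) then Y1 \<omega> else Y0 \<omega>))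
        {\<omega>\<in>space M. Z \<omega>} = (\<integral>\<omega>. of_bool (if R1 \<omega> then Y1 \<omega> else Y0 \<omega>) \<partial>M)"
    "cond_exp_ev M (\<lambda>\<omega>. of_bool (if (if Z \<omega> then R1 \<omega> else R0 \<omega>) then Y1 \<omega> else Y0 \<omega>))
        {\<omega>\<in>space M. \<not> Z \<omega>} = (\<integral>\<omega>. of_bool (if R0 \<omega> then Y1 \<omega> else Y0 \<omega>) \<partial>M)"
    using arm[of True] arm[of False] by simp_all
  have Y0_imp_Y1: "AE \<omega> in M. Y0 \<omega> \<longrightarrow> Y1 \<omega>"
    using mono by eventually_elim simp
  have "{\<omega>\<in>space M. \<not> Y0 \<omega> \<and> Y1 \<omega>} = {\<omega>\<in>space M. Y1 \<omega>} - {\<omega>\<in>space M. Y0 \<omega>}"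
    by blast
  also have "measure M \<dots> = measure M {\<omega>\<in>space M. Y1 \<omega>} - measure M {\<omega>\<in>space M. Y0 \<omega>}"
    by (rule measure_Diff_AE_subset[OF finite_measure_axioms]) (use Y0_imp_Y1 in \<open>simp_all add: AE_mp\<close>)
  finally have helpable_prob: "measure M {\<omega>\<in>space M. Y1 \<omega>} - measure M {\<omega>\<in>space M. Y0 \<omega>}
      = measure M {\<omega>\<in>space M. \<not> Y0 \<omega> \<and> Y1 \<omega>}" ..
  show ?thesis
    unfolding Let_def arms helpable_prob
      integral_diff_potential_outcomes[OF finite_measure_axioms mR0 mR1 mY0 mY1 Y0_imp_Y1]
    unfolding cond_exp_ev_def ..
qed

end
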